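(* Let $c>0$ and let $\boldsymbol\rho=(\rho_j)_{j\ge1}$ be a nonnegative sequence. Let $(\mathbb A_{\boldsymbol\nu,\lambda})_{\boldsymbol\nu\in\mathscr F,\lambda\in\mathbb N_0}$ be real numbers with $\mathbb A_{\boldsymbol\nu,0}=\delta_{\boldsymbol\nu,\boldsymbol 0}$, $\mathbb A_{\boldsymbol\nu,\lambda}=0$ for $\lambda>|\boldsymbol\nu|$, and otherwise $$\mathbb A_{\boldsymbol\nu+\boldsymbol e_j,\lambda}\le\sum_{\boldsymbol m\le\boldsymbol\nu}\binom{\boldsymbol\nu}{\boldsymbol m}c\,\boldsymbol\rho^{\boldsymbol\nu-\boldsymbol m+\boldsymbol e_j}(|\boldsymbol\nu|-|\boldsymbol m|+2)!\,\mathbb A_{\boldsymbol m,\lambda-1},\qquad j\ge1.$$ Then for all $\boldsymbol\nu\ne\boldsymbol0$ and $1\le\lambda\le|\boldsymbol\nu|$, $$\mathbb A_{\boldsymbol\nu,\lambda}\le c^\lambda\boldsymbol\rho^{\boldsymbol\nu}\sum_{k=1}^\lambda\frac{(-1)^{\lambda+k}(|\boldsymbol\nu|+2k-1)!}{(2k-1)!\,(\lambda-k)!\,k!}.$$ Moreover, if both inequalities in the recursion are replaced by equalities, then the conclusion holds with equality.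
   Context: $\mathscr F$ is the set of finitely supported multi-indices $\boldsymbol\nu\in\mathbb N_0^{\mathbb N}$, $|\boldsymbol\nu|=\sum_j\nu_j$, $\boldsymbol e_j$ is the $j$-th unit multi-index, $\boldsymbol m\le\boldsymbol\nu$ means $m_j\le\nu_j$ for all $j$, $\binom{\boldsymbol\nu}{\boldsymbol m}=\prod_j\binom{\nu_j}{m_j}$, $\boldsymbol\rho^{\boldsymbol\nu}=\prod_j\rho_j^{\nu_j}$, and $\delta$ is the Kronecker delta. *)

theory Defs
  imports Complex_Main
begin

text \<open>Multi-indices: finitely supported functions nat \<Rightarrow> nat (coordinates indexed from 0).\<close>

definition msupp :: "(nat \<Rightarrow> nat) \<Rightarrow> nat set" where
  "msupp \<nu> = {j. \<nu> j \<noteq> 0}"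

definition finsupp :: "(nat \<Rightarrow> nat) \<Rightarrow> bool" where
  "finsupp \<nu> \<longleftrightarrow> finite (msupp \<nu>)"

definition mabs :: "(nat \<Rightarrow> nat) \<Rightarrow> nat" where
  "mabs \<nu> = (\<Sum>j\<in>msupp \<nu>. \<nu> j)"

definition mle :: "(nat \<Rightarrow> nat) \<Rightarrow> (nat \<Rightarrow> nat) \<Rightarrow> bool" where
  "mle m \<nu> \<longleftrightarrow> (\<forall>j. m j \<le> \<nu> j)"

definition unitidx :: "nat \<Rightarrow> nat \<Rightarrow> nat" where
  "unitidx j = (\<lambda>i. if i = j then 1 else 0)"

definition mbinom :: "(nat \<Rightarrow> nat) \<Rightarrow> (nat \<Rightarrow> nat) \<Rightarrow> nat" where
  "mbinom \<nu> m = (\<Prod>j\<in>msupp \<nu>. \<nu> j choose m j)"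

definition mpow :: "(nat \<Rightarrow> real) \<Rightarrow> (nat \<Rightarrow> nat) \<Rightarrow> real" where
  "mpow \<rho> \<nu> = (\<Prod>j\<in>msupp \<nu>. \<rho> j ^ \<nu> j)"

definition madd :: "(nat \<Rightarrow> nat) \<Rightarrow> (nat \<Rightarrow> nat) \<Rightarrow> nat \<Rightarrow> nat" where
  "madd \<nu> \<mu> = (\<lambda>i. \<nu> i + \<mu> i)"

definition msub :: "(nat \<Rightarrow> nat) \<Rightarrow> (nat \<Rightarrow> nat) \<Rightarrow> nat \<Rightarrow> nat" where
  "msub \<nu> \<mu> = (\<lambda>i. \<nu> i - \<mu> i)"

end

theory Submission
  imports Defs "HOL-Library.FuncSet"
begin

text \<open>
  The bound depends on \<open>\<nu>\<close> only through \<open>|\<nu>|\<close> and \<open>\<rho>^\<nu>\<close>. Since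
  \<open>\<rho>^(\<nu>-m+e\<^sub>j) \<rho>^m = \<rho>^(\<nu>+e\<^sub>j)\<close> and, by the multi-index Vandermonde identity,
  \<open>\<Sum>\<^sub>m\<^sub>\<le>\<^sub>\<nu> C(\<nu>,m) f(|m|) = \<Sum>\<^sub>k C(|\<nu>|,k) f(k)\<close>, the function \<open>c^l \<rho>^\<nu> a(|\<nu>|,l)\<close>
  satisfies the recursion with equality as soon as the scalar sequence \<open>a\<close> satisfies
  \<open>a(n,0) = \<delta>(n,0)\<close> and \<open>a(n+1,l+1) = \<Sum>\<^sub>k C(n,k) (n-k+2)! a(k,l)\<close>.
  This scalar recursion is solved by \<open>a(n,l) = \<Sum>\<^sub>i (-1)^(l+i) (2i)\<^sub>n / ((l-i)! i!)\<close>
  with rising factorials \<open>(x)\<^sub>n\<close>: as \<open>(m+2)! = 2 (3)\<^sub>m\<close>, the Vandermonde identity for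
  rising factorials gives \<open>\<Sum>\<^sub>k C(n,k) (n-k+2)! (2i)\<^sub>k = 2 (2i+3)\<^sub>n = (2i+2)\<^sub>n\<^sub>+\<^sub>1 / (i+1)\<close>,
  which shifts \<open>i\<close> by one. Induction on \<open>|\<nu>|\<close> then compares \<open>A\<close> with this exact solution,
  with \<open>\<le>\<close> resp. \<open>=\<close> at every step, and \<open>(2i)\<^sub>n = (n+2i-1)!/(2i-1)!\<close> gives the stated sum.
\<close>

section \<open>The scalar recursion\<close>

lemma pochhammer_of_nat_Suc:
  "pochhammer (of_nat (Suc a) :: 'a::field_char_0) k = fact (a + k) / fact a"
proof (induction k)
  case (Suc k)
  have "fact (a + Suc k) = (of_nat (Suc a) + of_nat k) * (fact (a + k) :: 'a)"
    by (simp add: algebra_simps)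
  with Suc show ?case by (simp add: pochhammer_Suc)
qed simp

lemma fact_add_2_eq_pochhammer: "(fact (m + 2) :: 'a::field_char_0) = 2 * pochhammer 3 m"
proof -
  have "pochhammer (of_nat (Suc 2)) m = fact (2 + m) / (fact 2 :: 'a)"
    by (rule pochhammer_of_nat_Suc)
  then show ?thesis by (simp add: add.commute mult.commute)
qed

lemma binomial_sum_fact_pochhammer:
  fixes x :: "'a::field_char_0"
  shows "(\<Sum>k\<le>n. of_nat (n choose k) * fact (n - k + 2) * pochhammer x k) = 2 * pochhammer (x + 3) n"
  unfolding fact_add_2_eq_pochhammer pochhammer_binomial_sum[of x 3] sum_distrib_left
  by (simp add: mult_ac)

definition scalar_solution :: "nat \<Rightarrow> nat \<Rightarrow> real" where
  "scalar_solution n l =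
     (\<Sum>i\<le>l. (-1) ^ (l + i) * pochhammer (2 * of_nat i) n / (fact (l - i) * fact i))"

lemma scalar_solution_0_right: "scalar_solution n 0 = (if n = 0 then 1 else 0)"
  by (simp add: scalar_solution_def pochhammer_0_left)

lemma scalar_solution_0_left: "scalar_solution 0 l = (if l = 0 then 1 else 0)"
proof -
  have "scalar_solution 0 l = (-1) ^ l / fact l * (\<Sum>i\<le>l. (-1) ^ i * of_nat (l choose i))"
    unfolding scalar_solution_def sum_distrib_left
    by (intro sum.cong refl) (simp add: binomial_fact power_add field_simps)
  then show ?thesis
    by (cases "l = 0") (simp_all add: choose_alternating_sum)
qed

lemma scalar_solution_recursion:
  "(\<Sum>k\<le>n. of_nat (n choose k) * fact (n - k + 2) * scalar_solution k l)
     = scalar_solution (Suc n) (Suc l)"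
proof -
  have step: "(-1) ^ (l + i) / (fact (l - i) * fact i)
        * (\<Sum>k\<le>n. of_nat (n choose k) * fact (n - k + 2) * pochhammer (2 * of_nat i) k)
      = (-1) ^ (Suc l + Suc i) * pochhammer (2 * of_nat (Suc i)) (Suc n)
        / (fact (Suc l - Suc i) * fact (Suc i) :: real)" for i
  proof -
    define p where "p = pochhammer (2 * of_nat i + 3 :: real) n"
    have "pochhammer (2 * of_nat (Suc i)) (Suc n) = 2 * of_nat (Suc i) * p"
      unfolding p_def by (simp add: pochhammer_rec algebra_simps)
    moreover have "fact (Suc i) = of_nat (Suc i) * (fact i :: real)"
      by (rule fact_Suc)
    ultimately show ?thesis
      unfolding binomial_sum_fact_pochhammer p_def[symmetric]
      by (simp del: of_nat_Suc fact_Suc)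
  qed
  have "(\<Sum>k\<le>n. of_nat (n choose k) * fact (n - k + 2) * scalar_solution k l)
      = (\<Sum>i\<le>l. (-1) ^ (l + i) / (fact (l - i) * fact i)
          * (\<Sum>k\<le>n. of_nat (n choose k) * fact (n - k + 2) * pochhammer (2 * of_nat i) k))"
    unfolding scalar_solution_def sum_distrib_left sum_distrib_right
    by (subst sum.swap) (intro sum.cong refl, simp add: field_simps)
  also have "\<dots> = scalar_solution (Suc n) (Suc l)"
    unfolding step scalar_solution_def by (subst sum.atMost_Suc_shift) (simp add: pochhammer_0_left)
  finally show ?thesis .
qed

lemma scalar_solution_eq_0: "n < l \<Longrightarrow> scalar_solution n l = 0"
proof (induction n arbitrary: l rule: less_induct)
  case (less n)
  show ?case
  proof (cases n)
    case 0
    with less.prems show ?thesis by (simp add: scalar_solution_0_left)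
  next
    case (Suc n')
    with less.prems obtain l' where l: "l = Suc l'" and "n' < l'" by (cases l) auto
    have "scalar_solution n l
        = (\<Sum>k\<le>n'. of_nat (n' choose k) * fact (n' - k + 2) * scalar_solution k l')"
      unfolding Suc l by (rule scalar_solution_recursion[symmetric])
    also have "\<dots> = 0"
      using less.IH \<open>n' < l'\<close> Suc by (intro sum.neutral ballI) simp
    finally show ?thesis .
  qed
qed

lemma scalar_solution_closed_form:
  assumes "1 \<le> n"
  shows "scalar_solution n l = (\<Sum>k=1..l. (-1) ^ (l + k) * fact (n + 2 * k - 1)
                                   / (fact (2 * k - 1) * fact (l - k) * fact k))"
proof -
  have pochhammer_eq: "pochhammer (2 * of_nat k) n = (fact (n + 2 * k - 1) / fact (2 * k - 1) :: real)"
    if "1 \<le> k" for k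
    using pochhammer_of_nat_Suc[of "2 * k - 1" n, where 'a = real] that by (simp add: add.commute)
  have "{..l} = insert 0 {1..l}" by auto
  then have "scalar_solution n l
      = (\<Sum>k=1..l. (-1) ^ (l + k) * pochhammer (2 * of_nat k) n / (fact (l - k) * fact k))"
    using assms unfolding scalar_solution_def by (simp add: pochhammer_0_left)
  also have "\<dots> = (\<Sum>k=1..l. (-1) ^ (l + k) * fact (n + 2 * k - 1)
                                   / (fact (2 * k - 1) * fact (l - k) * fact k))"
    by (intro sum.cong refl) (simp add: pochhammer_eq)
  finally show ?thesis .
qed

section \<open>Multi-indices\<close>

lemma msupp_madd: "msupp (madd a b) = msupp a \<union> msupp b"
  by (auto simp: msupp_def madd_def)

lemma msupp_unitidx: "msupp (unitidx j) = {j}"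
  by (auto simp: msupp_def unitidx_def)

lemma msupp_mono: "mle m \<nu> \<Longrightarrow> msupp m \<subseteq> msupp \<nu>"
  unfolding msupp_def mle_def by (auto intro: neq0_conv[THEN iffD2] less_le_trans)

lemma finsupp_madd: "finsupp a \<Longrightarrow> finsupp b \<Longrightarrow> finsupp (madd a b)"
  by (simp add: finsupp_def msupp_madd)

lemma finsupp_unitidx: "finsupp (unitidx j)"
  by (simp add: finsupp_def msupp_unitidx)

lemma finsupp_mle: "mle m \<nu> \<Longrightarrow> finsupp \<nu> \<Longrightarrow> finsupp m"
  unfolding finsupp_def by (rule finite_subset[OF msupp_mono])

lemma finsupp_msub: "finsupp \<nu> \<Longrightarrow> finsupp (msub \<nu> m)"
  unfolding finsupp_def by (rule finite_subset[of _ "msupp \<nu>"]) (auto simp: msupp_def msub_def)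

lemma mabs_eq_sum: "finite S \<Longrightarrow> msupp \<nu> \<subseteq> S \<Longrightarrow> mabs \<nu> = (\<Sum>j\<in>S. \<nu> j)"
  unfolding mabs_def by (rule sum.mono_neutral_left) (auto simp: msupp_def)

lemma mpow_eq_prod: "finite S \<Longrightarrow> msupp \<nu> \<subseteq> S \<Longrightarrow> mpow \<rho> \<nu> = (\<Prod>j\<in>S. \<rho> j ^ \<nu> j)"
  unfolding mpow_def by (rule prod.mono_neutral_left) (auto simp: msupp_def)

lemma mbinom_eq_prod:
  assumes "finite S" and "msupp \<nu> \<subseteq> S" and "mle m \<nu>"
  shows "mbinom \<nu> m = (\<Prod>j\<in>S. \<nu> j choose m j)"
  unfolding mbinom_def
proof (rule prod.mono_neutral_left[OF assms(1,2)])
  show "\<forall>i\<in>S - msupp \<nu>. \<nu> i choose m i = 1"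
  proof
    fix i assume "i \<in> S - msupp \<nu>"
    moreover have "m i \<le> \<nu> i" using assms(3) by (simp add: mle_def)
    ultimately show "\<nu> i choose m i = 1" by (simp add: msupp_def)
  qed
qed

lemma mabs_madd:
  assumes "finsupp a" and "finsupp b"
  shows "mabs (madd a b) = mabs a + mabs b"
proof -
  let ?S = "msupp a \<union> msupp b"
  have "finite ?S" using assms by (simp add: finsupp_def)
  then have "mabs (madd a b) = (\<Sum>j\<in>?S. madd a b j)" and "mabs a = (\<Sum>j\<in>?S. a j)"
    and "mabs b = (\<Sum>j\<in>?S. b j)"
    by (auto intro!: mabs_eq_sum simp: msupp_madd)
  then show ?thesis by (simp add: madd_def sum.distrib)
qed

lemma mpow_madd:
  assumes "finsupp a" and "finsupp b"
  shows "mpow \<rho> (madd a b) = mpow \<rho> a * mpow \<rho> b"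
proof -
  let ?S = "msupp a \<union> msupp b"
  have "finite ?S" using assms by (simp add: finsupp_def)
  then have "mpow \<rho> (madd a b) = (\<Prod>j\<in>?S. \<rho> j ^ madd a b j)"
    and "mpow \<rho> a = (\<Prod>j\<in>?S. \<rho> j ^ a j)" and "mpow \<rho> b = (\<Prod>j\<in>?S. \<rho> j ^ b j)"
    by (auto intro!: mpow_eq_prod simp: msupp_madd)
  then show ?thesis by (simp add: madd_def power_add prod.distrib)
qed

lemma mabs_unitidx: "mabs (unitidx j) = 1"
  unfolding mabs_def msupp_unitidx by (simp add: unitidx_def)

lemma mabs_madd_unitidx: "finsupp \<nu> \<Longrightarrow> mabs (madd \<nu> (unitidx j)) = Suc (mabs \<nu>)"
  by (simp add: mabs_madd finsupp_unitidx mabs_unitidx)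

lemma mabs_eq_0_iff: "finsupp \<nu> \<Longrightarrow> mabs \<nu> = 0 \<longleftrightarrow> \<nu> = (\<lambda>_. 0)"
  by (auto simp: mabs_def finsupp_def msupp_def)

lemma mabs_mono:
  assumes "mle m \<nu>" and "finsupp \<nu>"
  shows "mabs m \<le> mabs \<nu>"
proof -
  have "mabs m = (\<Sum>j\<in>msupp \<nu>. m j)"
    using assms msupp_mono by (intro mabs_eq_sum) (auto simp: finsupp_def)
  also have "\<dots> \<le> mabs \<nu>"
    using assms(1) unfolding mabs_def mle_def by (intro sum_mono) simp
  finally show ?thesis .
qed

lemma mpow_nonneg: "(\<And>j. \<rho> j \<ge> 0) \<Longrightarrow> mpow \<rho> \<nu> \<ge> 0"
  unfolding mpow_def by (intro prod_nonneg zero_le_power) auto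

lemma mpow_zero: "mpow \<rho> (\<lambda>_. 0) = 1"
  by (simp add: mpow_def msupp_def)

lemma mpow_msub_madd_unitidx:
  assumes "mle m \<nu>" and "finsupp \<nu>"
  shows "mpow \<rho> (madd (msub \<nu> m) (unitidx j)) * mpow \<rho> m = mpow \<rho> (madd \<nu> (unitidx j))"
proof -
  have "madd (madd (msub \<nu> m) (unitidx j)) m = madd \<nu> (unitidx j)"
  proof
    fix i
    have "m i \<le> \<nu> i" using assms(1) by (simp add: mle_def)
    then show "madd (madd (msub \<nu> m) (unitidx j)) m i = madd \<nu> (unitidx j) i"
      by (simp add: madd_def msub_def)
  qed
  moreover have "finsupp (madd (msub \<nu> m) (unitidx j))" and "finsupp m"
    using assms by (simp_all add: finsupp_madd finsupp_msub finsupp_unitidx finsupp_mle)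
  ultimately show ?thesis by (metis mpow_madd)
qed

lemma finite_mle: "finsupp \<nu> \<Longrightarrow> finite {m. mle m \<nu>}"
proof -
  assume "finsupp \<nu>"
  let ?S = "msupp \<nu>" and ?ext = "\<lambda>g i. if i \<in> msupp \<nu> then g i else 0"
  have "{m. mle m \<nu>} \<subseteq> ?ext ` PiE ?S (\<lambda>i. {0..\<nu> i})"
  proof
    fix m assume "m \<in> {m. mle m \<nu>}"
    then have le: "m i \<le> \<nu> i" for i by (simp add: mle_def)
    have "m = ?ext (restrict m ?S)"
    proof
      fix i show "m i = ?ext (restrict m ?S) i" using le[of i] by (simp add: msupp_def)
    qed
    moreover have "restrict m ?S \<in> PiE ?S (\<lambda>i. {0..\<nu> i})"
      using le by (simp add: restrict_PiE_iff)
    ultimately show "m \<in> ?ext ` PiE ?S (\<lambda>i. {0..\<nu> i})" by (rule image_eqI)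
  qed
  moreover have "finite (PiE ?S (\<lambda>i. {0..\<nu> i}))"
    using \<open>finsupp \<nu>\<close> by (simp add: finsupp_def finite_PiE)
  ultimately show ?thesis by (rule finite_subset[OF _ finite_imageI])
qed

lemma finsupp_eq_madd_unitidx:
  assumes "finsupp \<nu>" and "\<nu> \<noteq> (\<lambda>_. 0)"
  obtains \<nu>' j where "finsupp \<nu>'" and "\<nu> = madd \<nu>' (unitidx j)"
proof -
  obtain j where j: "\<nu> j \<noteq> 0" using assms(2) by auto
  have "finsupp (\<nu>(j := \<nu> j - 1))"
    using assms(1) unfolding finsupp_def by (rule finite_subset[rotated]) (auto simp: msupp_def)
  moreover have "\<nu> = madd (\<nu>(j := \<nu> j - 1)) (unitidx j)"
    using j by (auto simp: madd_def unitidx_def)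
  ultimately show ?thesis by (rule that)
qed

lemma mle_fun_upd_pred:
  assumes "mle m (madd \<nu> (unitidx j))"
  shows "mle (m(j := m j - 1)) \<nu>"
  unfolding mle_def
proof
  fix i
  have "m i \<le> \<nu> i + (if i = j then 1 else 0)"
    using assms by (simp add: mle_def madd_def unitidx_def)
  then show "(m(j := m j - 1)) i \<le> \<nu> i" by (cases "i = j") auto
qed

lemma madd_unitidx_fun_upd_pred: "m j \<noteq> 0 \<Longrightarrow> madd (m(j := m j - 1)) (unitidx j) = m"
  by (auto simp: madd_def unitidx_def)

lemma fun_upd_pred_madd_unitidx: "(madd m (unitidx j))(j := madd m (unitidx j) j - 1) = m"
  by (auto simp: madd_def unitidx_def)

lemma mbinom_madd_unitidx:
  assumes "finsupp \<nu>" and le: "mle m (madd \<nu> (unitidx j))"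
  shows "mbinom (madd \<nu> (unitidx j)) m
           = (if mle m \<nu> then mbinom \<nu> m else 0)
             + (if m j = 0 then 0 else mbinom \<nu> (m(j := m j - 1)))"
proof -
  let ?N = "madd \<nu> (unitidx j)" and ?S = "insert j (msupp \<nu>)"
  define Q where "Q m' = (\<Prod>i\<in>?S - {j}. \<nu> i choose m' i)" for m'
  have S: "finite ?S" "j \<in> ?S" "msupp \<nu> \<subseteq> ?S" "msupp ?N \<subseteq> ?S"
    using assms(1) by (auto simp: finsupp_def msupp_madd msupp_unitidx)
  have N: "?N j = Suc (\<nu> j)" "\<And>i. i \<noteq> j \<Longrightarrow> ?N i = \<nu> i"
    by (simp_all add: madd_def unitidx_def)
  have split: "mbinom \<mu> m' = (\<mu> j choose m' j) * (\<Prod>i\<in>?S - {j}. \<mu> i choose m' i)"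
    if "msupp \<mu> \<subseteq> ?S" and "mle m' \<mu>" for \<mu> m'
    using mbinom_eq_prod[OF S(1) that] prod.remove[OF S(1,2)] by simp
  have "(\<Prod>i\<in>?S - {j}. ?N i choose m i) = Q m"
    unfolding Q_def by (intro prod.cong) (auto simp: N(2))
  then have "mbinom ?N m = (Suc (\<nu> j) choose m j) * Q m"
    by (simp add: split[OF S(4) le] N(1))
  also have "\<dots> = (\<nu> j choose m j) * Q m + (if m j = 0 then 0 else (\<nu> j choose (m j - 1)) * Q m)"
    by (cases "m j") (simp_all add: algebra_simps)
  also have "(\<nu> j choose m j) * Q m = (if mle m \<nu> then mbinom \<nu> m else 0)"
  proof (cases "mle m \<nu>")
    case True
    then show ?thesis by (simp add: split[OF S(3)] Q_def)
  next
    case False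
    then obtain i where "\<nu> i < m i" by (auto simp: mle_def not_le)
    moreover have "m i \<le> ?N i" using le by (simp add: mle_def)
    ultimately have "\<nu> j < m j" using N by (cases "i = j") auto
    with False show ?thesis by simp
  qed
  also have "(if m j = 0 then 0 else (\<nu> j choose (m j - 1)) * Q m)
           = (if m j = 0 then 0 else mbinom \<nu> (m(j := m j - 1)))"
  proof -
    have "(\<Prod>i\<in>?S - {j}. \<nu> i choose (m(j := m j - 1)) i) = Q m"
      unfolding Q_def by (intro prod.cong) auto
    then have "mbinom \<nu> (m(j := m j - 1)) = (\<nu> j choose (m j - 1)) * Q m"
      using split[OF S(3) mle_fun_upd_pred[OF le]] by simp
    then show ?thesis by simp
  qed
  finally show ?thesis .
qed

lemma sum_mle_madd_unitidx_shift:
  "(\<Sum>m\<in>{m. mle m (madd \<nu> (unitidx j)) \<and> m j \<noteq> 0}. g m)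
     = (\<Sum>m\<in>{m. mle m \<nu>}. g (madd m (unitidx j)))"
proof (rule sum.reindex_bij_witness[where i = "\<lambda>m. madd m (unitidx j)" and j = "\<lambda>m. m(j := m j - 1)"])
  fix m assume "m \<in> {m. mle m (madd \<nu> (unitidx j)) \<and> m j \<noteq> 0}"
  then have "mle m (madd \<nu> (unitidx j))" and "m j \<noteq> 0" by auto
  then show "madd (m(j := m j - 1)) (unitidx j) = m" and "m(j := m j - 1) \<in> {m. mle m \<nu>}"
    and "g (madd (m(j := m j - 1)) (unitidx j)) = g m"
    using madd_unitidx_fun_upd_pred[of m j] mle_fun_upd_pred[of m \<nu> j] by auto
next
  fix m assume "m \<in> {m. mle m \<nu>}"
  then show "(madd m (unitidx j))(j := madd m (unitidx j) j - 1) = m"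
    and "madd m (unitidx j) \<in> {m. mle m (madd \<nu> (unitidx j)) \<and> m j \<noteq> 0}"
    by (auto simp: fun_upd_pred_madd_unitidx mle_def madd_def unitidx_def)
qed

lemma sum_mle_madd_unitidx:
  fixes F :: "(nat \<Rightarrow> nat) \<Rightarrow> 'a::comm_semiring_1"
  assumes "finsupp \<nu>"
  shows "(\<Sum>m\<in>{m. mle m (madd \<nu> (unitidx j))}. of_nat (mbinom (madd \<nu> (unitidx j)) m) * F m)
           = (\<Sum>m\<in>{m. mle m \<nu>}. of_nat (mbinom \<nu> m) * F m)
             + (\<Sum>m\<in>{m. mle m \<nu>}. of_nat (mbinom \<nu> m) * F (madd m (unitidx j)))"
proof -
  let ?N = "madd \<nu> (unitidx j)"
  let ?M = "{m. mle m ?N}"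
  have fin: "finite ?M"
    using assms by (intro finite_mle finsupp_madd finsupp_unitidx)
  have "(\<Sum>m\<in>?M. of_nat (mbinom ?N m) * F m)
      = (\<Sum>m\<in>?M. if mle m \<nu> then of_nat (mbinom \<nu> m) * F m else 0)
        + (\<Sum>m\<in>?M. if m j \<noteq> 0 then of_nat (mbinom \<nu> (m(j := m j - 1))) * F m else 0)"
  proof -
    have "of_nat (mbinom ?N m) * F m
        = (if mle m \<nu> then of_nat (mbinom \<nu> m) * F m else 0)
          + (if m j \<noteq> 0 then of_nat (mbinom \<nu> (m(j := m j - 1))) * F m else 0)" if "m \<in> ?M" for m
      using mbinom_madd_unitidx[OF assms, of m j] that by (simp add: distrib_right)
    then show ?thesis by (simp add: sum.distrib[symmetric])
  qed
  also have "(\<Sum>m\<in>?M. if mle m \<nu> then of_nat (mbinom \<nu> m) * F m else 0)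
      = (\<Sum>m\<in>{m. mle m \<nu>}. of_nat (mbinom \<nu> m) * F m)"
  proof -
    have "{m \<in> ?M. mle m \<nu>} = {m. mle m \<nu>}"
      by (auto simp: mle_def madd_def) (meson trans_le_add1)
    then show ?thesis by (simp add: sum.inter_filter[OF fin, symmetric])
  qed
  also have "(\<Sum>m\<in>?M. if m j \<noteq> 0 then of_nat (mbinom \<nu> (m(j := m j - 1))) * F m else 0)
      = (\<Sum>m\<in>{m. mle m \<nu>}. of_nat (mbinom \<nu> m) * F (madd m (unitidx j)))"
  proof -
    have "(\<Sum>m\<in>?M. if m j \<noteq> 0 then of_nat (mbinom \<nu> (m(j := m j - 1))) * F m else 0)
        = (\<Sum>m\<in>{m. mle m ?N \<and> m j \<noteq> 0}. of_nat (mbinom \<nu> (m(j := m j - 1))) * F m)"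
      by (simp only: sum.inter_filter[OF fin, symmetric] mem_Collect_eq)
    also have "\<dots> = (\<Sum>m\<in>{m. mle m \<nu>}. of_nat (mbinom \<nu> m) * F (madd m (unitidx j)))"
      by (simp only: sum_mle_madd_unitidx_shift fun_upd_pred_madd_unitidx)
    finally show ?thesis .
  qed
  finally show ?thesis .
qed

lemma binomial_sum_Suc:
  fixes f :: "nat \<Rightarrow> 'a::comm_semiring_1"
  shows "(\<Sum>k\<le>Suc n. of_nat (Suc n choose k) * f k)
           = (\<Sum>k\<le>n. of_nat (n choose k) * f k) + (\<Sum>k\<le>n. of_nat (n choose k) * f (Suc k))"
proof -
  have "(\<Sum>k\<le>Suc n. of_nat (n choose k) * f k) = f 0 + (\<Sum>k\<le>n. of_nat (n choose Suc k) * f (Suc k))"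
    by (subst sum.atMost_Suc_shift) simp
  then have "(\<Sum>k\<le>n. of_nat (n choose k) * f k) = f 0 + (\<Sum>k\<le>n. of_nat (n choose Suc k) * f (Suc k))"
    by (simp add: binomial_eq_0)
  moreover have "(\<Sum>k\<le>Suc n. of_nat (Suc n choose k) * f k)
      = f 0 + (\<Sum>k\<le>n. of_nat (n choose Suc k) * f (Suc k)) + (\<Sum>k\<le>n. of_nat (n choose k) * f (Suc k))"
    by (subst sum.atMost_Suc_shift) (simp add: sum.distrib algebra_simps)
  ultimately show ?thesis by simp
qed

lemma sum_mle_mbinom_mabs:
  fixes f :: "nat \<Rightarrow> 'a::comm_semiring_1"
  assumes "finsupp \<nu>"
  shows "(\<Sum>m\<in>{m. mle m \<nu>}. of_nat (mbinom \<nu> m) * f (mabs m))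
           = (\<Sum>k\<le>mabs \<nu>. of_nat (mabs \<nu> choose k) * f k)"
  using assms
proof (induction "mabs \<nu>" arbitrary: \<nu> f)
  case 0
  then have "\<nu> = (\<lambda>_. 0)" by (simp add: mabs_eq_0_iff)
  moreover have "{m. mle m (\<lambda>_. 0)} = {\<lambda>_. 0}" by (auto simp: mle_def)
  ultimately show ?case by (simp add: mbinom_def msupp_def mabs_def)
next
  case (Suc n)
  then have "\<nu> \<noteq> (\<lambda>_. 0)" by (metis mabs_eq_0_iff nat.distinct(1))
  with Suc.prems obtain \<nu>' j where \<nu>': "finsupp \<nu>'" and \<nu>: "\<nu> = madd \<nu>' (unitidx j)"
    by (rule finsupp_eq_madd_unitidx)
  have n: "n = mabs \<nu>'" using Suc.hyps(2) \<nu> mabs_madd_unitidx[OF \<nu>'] by simp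
  have "(\<Sum>m\<in>{m. mle m \<nu>'}. of_nat (mbinom \<nu>' m) * f (mabs (madd m (unitidx j))))
      = (\<Sum>m\<in>{m. mle m \<nu>'}. of_nat (mbinom \<nu>' m) * f (Suc (mabs m)))"
    using \<nu>' by (intro sum.cong refl) (simp add: mabs_madd_unitidx finsupp_mle)
  then show ?case
    unfolding \<nu> sum_mle_madd_unitidx[OF \<nu>'] mabs_madd_unitidx[OF \<nu>'] binomial_sum_Suc
    using Suc.hyps(1)[OF n \<nu>', of f] Suc.hyps(1)[OF n \<nu>', of "\<lambda>k. f (Suc k)"] by simp
qed

section \<open>Comparison with the exact solution\<close>

definition recursion_solution :: "real \<Rightarrow> (nat \<Rightarrow> real) \<Rightarrow> (nat \<Rightarrow> nat) \<Rightarrow> nat \<Rightarrow> real" where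
  "recursion_solution c \<rho> \<nu> l = c ^ l * mpow \<rho> \<nu> * scalar_solution (mabs \<nu>) l"

lemma recursion_solution_recursion:
  assumes "finsupp \<nu>"
  shows "(\<Sum>m\<in>{m. mle m \<nu>}. real (mbinom \<nu> m) * c * mpow \<rho> (madd (msub \<nu> m) (unitidx j))
            * fact (mabs \<nu> - mabs m + 2) * recursion_solution c \<rho> m l)
         = recursion_solution c \<rho> (madd \<nu> (unitidx j)) (Suc l)"
proof -
  let ?K = "c ^ Suc l * mpow \<rho> (madd \<nu> (unitidx j))"
  let ?g = "\<lambda>k. fact (mabs \<nu> - k + 2) * scalar_solution k l"
  have "(\<Sum>m\<in>{m. mle m \<nu>}. real (mbinom \<nu> m) * c * mpow \<rho> (madd (msub \<nu> m) (unitidx j))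
            * fact (mabs \<nu> - mabs m + 2) * recursion_solution c \<rho> m l)
      = (\<Sum>m\<in>{m. mle m \<nu>}. ?K * (real (mbinom \<nu> m) * ?g (mabs m)))"
  proof (rule sum.cong[OF refl])
    fix m assume "m \<in> {m. mle m \<nu>}"
    then have pw: "mpow \<rho> (madd (msub \<nu> m) (unitidx j)) * mpow \<rho> m = mpow \<rho> (madd \<nu> (unitidx j))"
      using assms by (simp add: mpow_msub_madd_unitidx)
    show "real (mbinom \<nu> m) * c * mpow \<rho> (madd (msub \<nu> m) (unitidx j))
            * fact (mabs \<nu> - mabs m + 2) * recursion_solution c \<rho> m l
        = ?K * (real (mbinom \<nu> m) * ?g (mabs m))"
      unfolding recursion_solution_def by (simp add: ac_simps flip: pw)
  qed
  also have "\<dots> = ?K * (\<Sum>m\<in>{m. mle m \<nu>}. real (mbinom \<nu> m) * ?g (mabs m))"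
    by (simp only: sum_distrib_left)
  also have "\<dots> = ?K * (\<Sum>k\<le>mabs \<nu>. real (mabs \<nu> choose k) * ?g k)"
    by (simp only: sum_mle_mbinom_mabs[OF assms, of ?g])
  also have "\<dots> = recursion_solution c \<rho> (madd \<nu> (unitidx j)) (Suc l)"
    unfolding recursion_solution_def mabs_madd_unitidx[OF assms] scalar_solution_recursion[symmetric]
    by (simp add: mult.assoc)
  finally show ?thesis .
qed

lemma recursion_solution_closed_form:
  assumes "finsupp \<nu>" and "\<nu> \<noteq> (\<lambda>_. 0)"
  shows "recursion_solution c \<rho> \<nu> l = c ^ l * mpow \<rho> \<nu> *
      (\<Sum>k=1..l. (-1) ^ (l + k) * fact (mabs \<nu> + 2 * k - 1) / (fact (2 * k - 1) * fact (l - k) * fact k))"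
  using assms mabs_eq_0_iff[of \<nu>] by (simp add: recursion_solution_def scalar_solution_closed_form)

lemma recursion_comparison:
  fixes R :: "real \<Rightarrow> real \<Rightarrow> bool" and A :: "(nat \<Rightarrow> nat) \<Rightarrow> nat \<Rightarrow> real"
  assumes R: "R = (\<le>) \<or> R = (=)"
    and c: "c \<ge> 0" and \<rho>: "\<And>j. \<rho> j \<ge> 0"
    and A_zero: "\<And>\<nu>. finsupp \<nu> \<Longrightarrow> A \<nu> 0 = (if \<nu> = (\<lambda>_. 0) then 1 else 0)"
    and A_vanish: "\<And>\<nu> l. finsupp \<nu> \<Longrightarrow> l > mabs \<nu> \<Longrightarrow> A \<nu> l = 0"
    and A_rec: "\<And>\<nu> j l. finsupp \<nu> \<Longrightarrow> 1 \<le> l \<Longrightarrow> l \<le> mabs (madd \<nu> (unitidx j)) \<Longrightarrow>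
            R (A (madd \<nu> (unitidx j)) l)
              (\<Sum>m\<in>{m. mle m \<nu>}. real (mbinom \<nu> m) * c * mpow \<rho> (madd (msub \<nu> m) (unitidx j))
                  * fact (mabs \<nu> - mabs m + 2) * A m (l - 1))"
    and "finsupp \<nu>"
  shows "R (A \<nu> l) (recursion_solution c \<rho> \<nu> l)"
proof -
  have R_eq: "x = y \<Longrightarrow> R x y" for x y using R by auto
  have R_trans: "R x y \<Longrightarrow> R y z \<Longrightarrow> R x z" for x y z using R by auto
  have R_sum: "R (\<Sum>m\<in>I. w m * x m) (\<Sum>m\<in>I. w m * y m)"
    if "\<And>m. m \<in> I \<Longrightarrow> 0 \<le> w m \<and> R (x m) (y m)" for I w x y
    using R that by (auto intro: sum_mono mult_left_mono)
  show ?thesis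
    using \<open>finsupp \<nu>\<close>
  proof (induction "mabs \<nu>" arbitrary: \<nu> l rule: less_induct)
    case less
    consider "l = 0" | "mabs \<nu> < l" | l' where "l = Suc l'" and "l \<le> mabs \<nu>"
      by (metis not0_implies_Suc not_le)
    then show ?case
    proof cases
      case 1
      then show ?thesis
        using less.prems mabs_eq_0_iff[OF less.prems]
        by (intro R_eq) (simp add: A_zero recursion_solution_def scalar_solution_0_right mpow_zero)
    next
      case 2
      then show ?thesis
        using less.prems by (intro R_eq) (simp add: A_vanish recursion_solution_def scalar_solution_eq_0)
    next
      case 3
      then have "\<nu> \<noteq> (\<lambda>_. 0)" by (auto simp: mabs_def msupp_def)
      with less.prems obtain \<nu>' j where \<nu>': "finsupp \<nu>'" and \<nu>: "\<nu> = madd \<nu>' (unitidx j)"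
        by (rule finsupp_eq_madd_unitidx)
      define w where "w m = real (mbinom \<nu>' m) * c * mpow \<rho> (madd (msub \<nu>' m) (unitidx j))
                              * fact (mabs \<nu>' - mabs m + 2)" for m
      have "R (A \<nu> l) (\<Sum>m\<in>{m. mle m \<nu>'}. w m * A m l')"
        using A_rec[OF \<nu>', of l j] 3 unfolding \<nu> w_def by simp
      moreover have "R (\<Sum>m\<in>{m. mle m \<nu>'}. w m * A m l')
                       (\<Sum>m\<in>{m. mle m \<nu>'}. w m * recursion_solution c \<rho> m l')"
      proof (rule R_sum)
        fix m assume m: "m \<in> {m. mle m \<nu>'}"
        have "0 \<le> w m" unfolding w_def using c \<rho> by (simp add: mpow_nonneg)
        moreover have "mabs m < mabs \<nu>"
          using m \<nu>' mabs_mono[of m \<nu>'] mabs_madd_unitidx[OF \<nu>'] \<nu> by simp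
        ultimately show "0 \<le> w m \<and> R (A m l') (recursion_solution c \<rho> m l')"
          using less.hyps m \<nu>' finsupp_mle by auto
      qed
      moreover have "(\<Sum>m\<in>{m. mle m \<nu>'}. w m * recursion_solution c \<rho> m l')
                       = recursion_solution c \<rho> \<nu> l"
        unfolding w_def \<nu> \<open>l = Suc l'\<close> by (rule recursion_solution_recursion[OF \<nu>'])
      ultimately show ?thesis by (metis R_trans)
    qed
  qed
qed

theorem mainTheorem9:
  fixes c :: real and \<rho> :: "nat \<Rightarrow> real" and A :: "(nat \<Rightarrow> nat) \<Rightarrow> nat \<Rightarrow> real"
  assumes c_pos: "c > 0"
    and rho_nonneg: "\<And>j. \<rho> j \<ge> 0"
    and A_zero: "\<And>\<nu>. finsupp \<nu> \<Longrightarrow> A \<nu> 0 = (if \<nu> = (\<lambda>_. 0) then 1 else 0)"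
    and A_vanish: "\<And>\<nu> l. finsupp \<nu> \<Longrightarrow> l > mabs \<nu> \<Longrightarrow> A \<nu> l = 0"
  shows "((\<forall>\<nu> j l. finsupp \<nu> \<longrightarrow> 1 \<le> l \<longrightarrow> l \<le> mabs (madd \<nu> (unitidx j)) \<longrightarrow>
            A (madd \<nu> (unitidx j)) l \<le>
              (\<Sum>m\<in>{m. mle m \<nu>}. real (mbinom \<nu> m) * c * mpow \<rho> (madd (msub \<nu> m) (unitidx j))
                  * fact (mabs \<nu> - mabs m + 2) * A m (l - 1)))
         \<longrightarrow> (\<forall>\<nu> l. finsupp \<nu> \<longrightarrow> \<nu> \<noteq> (\<lambda>_. 0) \<longrightarrow> 1 \<le> l \<longrightarrow> l \<le> mabs \<nu> \<longrightarrow>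
            A \<nu> l \<le> c ^ l * mpow \<rho> \<nu> *
              (\<Sum>k=1..l. (-1) ^ (l + k) * fact (mabs \<nu> + 2 * k - 1)
                  / (fact (2 * k - 1) * fact (l - k) * fact k))))
    \<and> ((\<forall>\<nu> j l. finsupp \<nu> \<longrightarrow> 1 \<le> l \<longrightarrow> l \<le> mabs (madd \<nu> (unitidx j)) \<longrightarrow>
            A (madd \<nu> (unitidx j)) l =
              (\<Sum>m\<in>{m. mle m \<nu>}. real (mbinom \<nu> m) * c * mpow \<rho> (madd (msub \<nu> m) (unitidx j))
                  * fact (mabs \<nu> - mabs m + 2) * A m (l - 1)))
         \<longrightarrow> (\<forall>\<nu> l. finsupp \<nu> \<longrightarrow> \<nu> \<noteq> (\<lambda>_. 0) \<longrightarrow> 1 \<le> l \<longrightarrow> l \<le> mabs \<nu> \<longrightarrow>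
            A \<nu> l = c ^ l * mpow \<rho> \<nu> *
              (\<Sum>k=1..l. (-1) ^ (l + k) * fact (mabs \<nu> + 2 * k - 1)
                  / (fact (2 * k - 1) * fact (l - k) * fact k))))"
proof -
  have solution_bound: "R (A \<nu> l) (c ^ l * mpow \<rho> \<nu> *
      (\<Sum>k=1..l. (-1) ^ (l + k) * fact (mabs \<nu> + 2 * k - 1) / (fact (2 * k - 1) * fact (l - k) * fact k)))"
    if R: "R = (\<le>) \<or> R = (=)"
      and A_rec: "\<forall>\<nu> j l. finsupp \<nu> \<longrightarrow> 1 \<le> l \<longrightarrow> l \<le> mabs (madd \<nu> (unitidx j)) \<longrightarrow>
        R (A (madd \<nu> (unitidx j)) l)
          (\<Sum>m\<in>{m. mle m \<nu>}. real (mbinom \<nu> m) * c * mpow \<rho> (madd (msub \<nu> m) (unitidx j))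
              * fact (mabs \<nu> - mabs m + 2) * A m (l - 1))"
      and \<nu>: "finsupp \<nu>" "\<nu> \<noteq> (\<lambda>_. 0)"
    for R \<nu> l
    using recursion_comparison[of R c \<rho> A, OF R less_imp_le[OF c_pos] rho_nonneg A_zero A_vanish
        A_rec[rule_format] \<nu>(1)] recursion_solution_closed_form[OF \<nu>] by simp
  show ?thesis
    using solution_bound[where R = "(\<le>)"] solution_bound[where R = "(=)"] by blast
qed

end
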